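(* Let an FCA with state set $S$, neighborhood $m=l+1+r$, local rule $f$ and boundary type $b\in\{\text{null},\text{periodic}\}$ be given, and let $G$ be its reversibility graph. Suppose $N$ is a negative vertex of $G$ with value $k\ge1$ and two circuits of lengths $r_1,r_2$ pass through $N$, with $\gcd(r_1,r_2)=1$. Then the FCA is not $n$-cell-reversible for every integer $n>k+r_1r_2-r_1-r_2$.
   Context: A one-dimensional finite cellular automaton (FCA) is given by a state set $S=\{0,1,\dots,s-1\}$, integers $l,r\ge 0$ with neighborhood size $m=l+1+r\ge 2$, a local rule $f:S^m\to S$, and a boundary type $b\in\{\text{null},\text{periodic}\}$. For $n\ge 1$ the global map $\tau_n:S^n\to S^n$ sends $(x_0,\dots,x_{n-1})$ to $(y_0,\dots,y_{n-1})$ with $y_i=f(x_{i-l},\dots,x_{i+r})$, where for the null boundary $x_j=0$ whenever $j<0$ or $j>n-1$, and for the periodic boundary indices are taken modulo $n$. The FCA is $n$-cell-reversible if $\tau_n$ is a bijection (equivalently, since $S^n$ is finite, surjective). Reversibility graph (RG). Null boundary: vertices are subsets of $S^{m-1}$; the root is $N_0=\{(a_1,\dots,a_{m-1})\in S^{m-1}: a_1=\dots=a_l=0\}$; the acceptance set is $R=\{(a_1,\dots,a_{m-1})\in S^{m-1}: a_{m-r}=\dots=a_{m-1}=0\}$ (so $R=S^{m-1}$ if $r=0$); for a subset $N$ and $c\in S$, $\delta(N,c)=\{(a_1,\dots,a_{m-1})\in S^{m-1}:\exists a_0\in S,\ (a_0,\dots,a_{m-2})\in N,\ f(a_0,a_1,\dots,a_{m-1})=c\}$.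 Periodic boundary: vertices are subsets of $S^{m-1}\times S^{m-1}$; the root and the acceptance set are $N_0=R=\{(a,a):a\in S^{m-1}\}$; $\delta(N,c)=\{((a_1,\dots,a_{m-1}),(b_1,\dots,b_{m-1})):\exists b_0\in S,\ ((a_1,\dots,a_{m-1}),(b_0,\dots,b_{m-2}))\in N,\ f(b_0,\dots,b_{m-1})=c\}$. In both cases the RG is the directed graph whose vertex set consists of all subsets obtainable from $N_0$ by repeatedly applying $\delta$ (including $N_0$; equal subsets are the same vertex; the empty set may occur), with, for each vertex $N$ and each $c\in S$, an edge labelled $c$ from $N$ to $\delta(N,c)$. The value of a vertex $N$ is the length of a shortest directed path from $N_0$ to $N$. A vertex $N$ is negative if $N\cap R=\emptyset$. A circuit is an elementary directed cycle of the RG (a closed directed path with no repeated vertex other than its start = end; a loop is a circuit of length $1$); its length is its number of edges, and it passes through $N$ if $N$ is one of its vertices. *)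

theory Defs
  imports Main
begin

datatype boundary = Null | Periodic

definition configs :: "nat \<Rightarrow> nat \<Rightarrow> nat list set" where
  "configs s n = {x. length x = n \<and> set x \<subseteq> {..<s}}"

definition cell :: "boundary \<Rightarrow> nat list \<Rightarrow> int \<Rightarrow> nat" where
  "cell b x j = (let n = int (length x) in
     (case b of Null \<Rightarrow> (if 0 \<le> j \<and> j < n then x ! nat j else 0)
              | Periodic \<Rightarrow> x ! nat (j mod n)))"

definition global_map :: "boundary \<Rightarrow> nat \<Rightarrow> nat \<Rightarrow> (nat list \<Rightarrow> nat) \<Rightarrow> nat list \<Rightarrow> nat list" where
  "global_map b l r f x =
     map (\<lambda>i. f (map (\<lambda>j. cell b x (int i + int j - int l)) [0..<l+1+r])) [0..<length x]"

definition n_cell_reversible :: "boundary \<Rightarrow> nat \<Rightarrow> nat \<Rightarrow> nat \<Rightarrow> (nat list \<Rightarrow> nat) \<Rightarrow> nat \<Rightarrow> bool" where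
  "n_cell_reversible b s l r f n = bij_betw (global_map b l r f) (configs s n) (configs s n)"

definition local_rule :: "nat \<Rightarrow> nat \<Rightarrow> (nat list \<Rightarrow> nat) \<Rightarrow> bool" where
  "local_rule s m f = (\<forall>xs. length xs = m \<and> set xs \<subseteq> {..<s} \<longrightarrow> f xs < s)"

definition deltas :: "('a set \<Rightarrow> nat \<Rightarrow> 'a set) \<Rightarrow> 'a set \<Rightarrow> nat list \<Rightarrow> 'a set" where
  "deltas \<delta> N0 w = foldl \<delta> N0 w"

definition rg_vertices :: "nat \<Rightarrow> 'a set \<Rightarrow> ('a set \<Rightarrow> nat \<Rightarrow> 'a set) \<Rightarrow> 'a set set" where
  "rg_vertices s N0 \<delta> = {deltas \<delta> N0 w | w. set w \<subseteq> {..<s}}"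

definition rg_value :: "nat \<Rightarrow> 'a set \<Rightarrow> ('a set \<Rightarrow> nat \<Rightarrow> 'a set) \<Rightarrow> 'a set \<Rightarrow> nat" where
  "rg_value s N0 \<delta> N = (LEAST k. \<exists>w. length w = k \<and> set w \<subseteq> {..<s} \<and> deltas \<delta> N0 w = N)"

definition rg_circuit :: "nat \<Rightarrow> ('a set \<Rightarrow> nat \<Rightarrow> 'a set) \<Rightarrow> 'a set \<Rightarrow> nat \<Rightarrow> bool" where
  "rg_circuit s \<delta> N L = (\<exists>vs. length vs = L \<and> L \<ge> 1 \<and> vs ! 0 = N \<and> distinct vs \<and>
      (\<forall>i<L. \<exists>c<s. \<delta> (vs ! i) c = vs ! ((i + 1) mod L)))"

definition neg_vertex_condition ::
  "nat \<Rightarrow> 'a set \<Rightarrow> 'a set \<Rightarrow> ('a set \<Rightarrow> nat \<Rightarrow> 'a set) \<Rightarrow> nat \<Rightarrow> nat \<Rightarrow> nat \<Rightarrow> bool" where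
  "neg_vertex_condition s N0 R \<delta> k r1 r2 = (\<exists>N. N \<in> rg_vertices s N0 \<delta> \<and> N \<inter> R = {} \<and>
      rg_value s N0 \<delta> N = k \<and> rg_circuit s \<delta> N r1 \<and> rg_circuit s \<delta> N r2)"

definition tuples :: "nat \<Rightarrow> nat \<Rightarrow> nat list set" where
  "tuples s len = {a. length a = len \<and> set a \<subseteq> {..<s}}"

definition null_root :: "nat \<Rightarrow> nat \<Rightarrow> nat \<Rightarrow> nat list set" where
  "null_root s l r = {a \<in> tuples s (l + r). \<forall>x \<in> set (take l a). x = 0}"

definition null_accept :: "nat \<Rightarrow> nat \<Rightarrow> nat \<Rightarrow> nat list set" where
  "null_accept s l r = {a \<in> tuples s (l + r). \<forall>x \<in> set (drop l a). x = 0}"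

definition null_delta :: "nat \<Rightarrow> nat \<Rightarrow> nat \<Rightarrow> (nat list \<Rightarrow> nat) \<Rightarrow> nat list set \<Rightarrow> nat \<Rightarrow> nat list set" where
  "null_delta s l r f N c = {a \<in> tuples s (l + r).
      \<exists>a0<s. (a0 # butlast a) \<in> N \<and> f (a0 # a) = c}"

definition per_root :: "nat \<Rightarrow> nat \<Rightarrow> nat \<Rightarrow> (nat list \<times> nat list) set" where
  "per_root s l r = {(a, a) | a. a \<in> tuples s (l + r)}"

definition per_delta :: "nat \<Rightarrow> nat \<Rightarrow> nat \<Rightarrow> (nat list \<Rightarrow> nat) \<Rightarrow>
    (nat list \<times> nat list) set \<Rightarrow> nat \<Rightarrow> (nat list \<times> nat list) set" where
  "per_delta s l r f N c = {(a, b). a \<in> tuples s (l + r) \<and> b \<in> tuples s (l + r) \<and>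
      (\<exists>b0<s. (a, b0 # butlast b) \<in> N \<and> f (b0 # b) = c)}"

definition RG_condition :: "boundary \<Rightarrow> nat \<Rightarrow> nat \<Rightarrow> nat \<Rightarrow> (nat list \<Rightarrow> nat) \<Rightarrow> nat \<Rightarrow> nat \<Rightarrow> nat \<Rightarrow> bool" where
  "RG_condition b s l r f k r1 r2 = (case b of
      Null \<Rightarrow> neg_vertex_condition s (null_root s l r) (null_accept s l r) (null_delta s l r f) k r1 r2
    | Periodic \<Rightarrow> neg_vertex_condition s (per_root s l r) (per_root s l r) (per_delta s l r f) k r1 r2)"

end

theory Submission
  imports Defs
begin

text \<open>
  Reading a word y along the reversibility graph tracks, for every preimage x of y, the window
  (x_{j-l}, ..., x_{j+r-1}) of x (paired with the initial window in the periodic case): after n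
  letters that window lies in the acceptance set.  So a word of length n ending in a negative vertex
  has no preimage.  Such words exist for every n > k + r1 r2 - r1 - r2: a shortest path of length k
  to the negative vertex N, followed by p turns of the first circuit and q of the second, where
  n - k = p r1 + q r2 is solvable in naturals because n - k exceeds the Frobenius number
  r1 r2 - r1 - r2 of the coprime pair r1, r2.
\<close>

lemma frobenius_bound_representable:
  fixes a b t :: nat
  assumes "coprime a b" and "b \<ge> 1" and "(a - 1) * (b - 1) \<le> t"
  shows "\<exists>p q. t = p * a + q * b"
proof -
  obtain u v :: int where uv: "u * int a + v * int b = 1"
    using bezout_int[of "int a" "int b"] assms(1) by (auto simp: coprime_iff_gcd_eq_1)
  define p where "p = u * int t mod int b"
  define q where "q = int t * v + (u * int t div int b) * int a"
  have p_bounds: "0 \<le> p" "p < int b" using assms(2) by (simp_all add: p_def)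
  have t_eq: "int t = p * int a + q * int b"
  proof -
    have "int t = int t * (u * int a + v * int b)" using uv by simp
    also have "\<dots> = (p + int b * (u * int t div int b)) * int a + int t * v * int b"
      by (simp add: p_def algebra_simps)
    finally show ?thesis by (simp add: q_def algebra_simps)
  qed
  have "q * int b > - int b"
  proof -
    have "p * int a \<le> (int b - 1) * int a" using p_bounds by (intro mult_right_mono) auto
    moreover have "(int a - 1) * (int b - 1) \<le> int t"
    proof -
      have "(int a - 1) * (int b - 1) \<le> int (a - 1) * int (b - 1)"
        using assms(2) by (cases a) (auto simp: of_nat_diff)
      also have "\<dots> \<le> int t" using assms(3) by (simp flip: of_nat_mult)
      finally show ?thesis .
    qed
    ultimately show ?thesis using t_eq by (simp add: algebra_simps)
  qed
  have "q \<ge> 0"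
  proof (rule ccontr)
    assume "\<not> q \<ge> 0"
    hence "q * int b \<le> - 1 * int b" by (intro mult_right_mono) auto
    with \<open>q * int b > - int b\<close> show False by simp
  qed
  hence "int t = int (nat p * a + nat q * b)" using t_eq p_bounds by simp
  hence "t = nat p * a + nat q * b" by (simp only: of_nat_eq_iff)
  thus ?thesis by blast
qed

lemma deltas_snoc: "deltas \<delta> N0 (w @ [c]) = \<delta> (deltas \<delta> N0 w) c"
  by (simp add: deltas_def)

lemma foldl_concat_replicate_fixpoint:
  "foldl \<delta> N u = N \<Longrightarrow> foldl \<delta> N (concat (replicate p u)) = N"
  by (induction p) auto

lemma rg_circuit_closed_word:
  assumes "rg_circuit s \<delta> N L"
  obtains u where "length u = L" "set u \<subseteq> {..<s}" "foldl \<delta> N u = N"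
proof -
  obtain vs where vs: "length vs = L" "L \<ge> 1" "vs ! 0 = N"
    "\<forall>i<L. \<exists>c<s. \<delta> (vs ! i) c = vs ! ((i + 1) mod L)"
    using assms unfolding rg_circuit_def by blast
  have "\<exists>u. length u = i \<and> set u \<subseteq> {..<s} \<and> foldl \<delta> N u = vs ! (i mod L)" if "i \<le> L" for i
    using that
  proof (induction i)
    case 0
    then show ?case using vs by simp
  next
    case (Suc i)
    then obtain u where u: "length u = i" "set u \<subseteq> {..<s}" "foldl \<delta> N u = vs ! i" by auto
    have "i < L" using Suc.prems by simp
    then obtain c where "c < s" "\<delta> (vs ! i) c = vs ! (Suc i mod L)" using vs(4) by auto
    with u show ?case by (intro exI[of _ "u @ [c]"]) simp
  qed
  from this[of L] show thesis using vs that by auto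
qed

lemma rg_value_word:
  assumes "N \<in> rg_vertices s N0 \<delta>"
  obtains w where "length w = rg_value s N0 \<delta> N" "set w \<subseteq> {..<s}" "deltas \<delta> N0 w = N"
proof -
  let ?P = "\<lambda>k. \<exists>w. length w = k \<and> set w \<subseteq> {..<s} \<and> deltas \<delta> N0 w = N"
  obtain w0 where "set w0 \<subseteq> {..<s}" "deltas \<delta> N0 w0 = N"
    using assms unfolding rg_vertices_def by blast
  hence "?P (length w0)" by blast
  from LeastI[of ?P, OF this] show thesis using that unfolding rg_value_def by blast
qed

lemma neg_vertex_condition_negative_word:
  assumes "neg_vertex_condition s N0 R \<delta> k r1 r2" and "coprime r1 r2"
    and "int k + int r1 * int r2 - int r1 - int r2 < int n"
  obtains y where "length y = n" "set y \<subseteq> {..<s}" "deltas \<delta> N0 y \<inter> R = {}"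
proof -
  obtain N where N: "N \<in> rg_vertices s N0 \<delta>" "N \<inter> R = {}" "rg_value s N0 \<delta> N = k"
     "rg_circuit s \<delta> N r1" "rg_circuit s \<delta> N r2"
    using assms(1) unfolding neg_vertex_condition_def by blast
  obtain w where w: "length w = k" "set w \<subseteq> {..<s}" "deltas \<delta> N0 w = N"
    using rg_value_word[OF N(1)] N(3) by metis
  obtain u1 where u1: "length u1 = r1" "set u1 \<subseteq> {..<s}" "foldl \<delta> N u1 = N"
    using rg_circuit_closed_word[OF N(4)] .
  obtain u2 where u2: "length u2 = r2" "set u2 \<subseteq> {..<s}" "foldl \<delta> N u2 = N"
    using rg_circuit_closed_word[OF N(5)] .
  have "r1 \<ge> 1" "r2 \<ge> 1" using N(4,5) by (auto simp: rg_circuit_def)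
  then have "int ((r1 - 1) * (r2 - 1)) = int r1 * int r2 - int r1 - int r2 + 1"
    by (simp only: of_nat_mult of_nat_diff) (simp add: algebra_simps)
  with assms(3) have n_bound: "k + (r1 - 1) * (r2 - 1) \<le> n" by linarith
  obtain p q where pq: "n - k = p * r1 + q * r2"
    using frobenius_bound_representable[OF assms(2) \<open>r2 \<ge> 1\<close>] n_bound by fastforce
  define y where "y = w @ concat (replicate p u1) @ concat (replicate q u2)"
  have "length y = n" using pq n_bound w u1 u2 by (simp add: y_def length_concat sum_list_replicate)
  moreover have "set y \<subseteq> {..<s}" using w u1 u2 by (auto simp: y_def)
  moreover have "deltas \<delta> N0 y = N"
    using w u1 u2 by (simp add: y_def deltas_def foldl_concat_replicate_fixpoint)
  ultimately show thesis using N(2) that by blast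
qed

definition window :: "(int \<Rightarrow> nat) \<Rightarrow> nat \<Rightarrow> nat \<Rightarrow> nat \<Rightarrow> nat list" where
  "window g l L j = map (\<lambda>t. g (int j + int t - int l)) [0..<L]"

lemma window_Suc: "window g l (Suc L) j = g (int j - int l) # window g l L (Suc j)"
  by (simp add: window_def upt_conv_Cons map_Suc_upt[symmetric] algebra_simps del: upt_Suc)

lemma window_butlast: "butlast (window g l (Suc L) j) = window g l L j"
  by (simp add: window_def map_butlast[symmetric])

lemma global_map_nth_window:
  "i < length x \<Longrightarrow> global_map b l r f x ! i = f (window (cell b x) l (Suc (l + r)) i)"
  by (simp add: global_map_def window_def)

lemma length_global_map [simp]: "length (global_map b l r f x) = length x"
  by (simp add: global_map_def)

lemma window_in_tuples: "(\<And>i. g i < s) \<Longrightarrow> window g l L j \<in> tuples s L"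
  by (auto simp: window_def tuples_def)

lemma cell_Null_less: "set x \<subseteq> {..<s} \<Longrightarrow> 0 < s \<Longrightarrow> cell Null x j < s"
  by (auto simp: cell_def Let_def intro!: nth_mem dest!: subsetD[where c = "x ! nat j"])

lemma cell_Periodic_less: "set x \<subseteq> {..<s} \<Longrightarrow> x \<noteq> [] \<Longrightarrow> cell Periodic x j < s"
  by (auto simp: cell_def Let_def nat_less_iff intro!: nth_mem
      dest!: subsetD[where c = "x ! nat (j mod int (length x))"])

lemma null_delta_window_step:
  assumes "l + r \<ge> 1" and "\<And>i. g i < s" and "window g l (l + r) j \<in> N"
  shows "window g l (l + r) (Suc j) \<in> null_delta s l r f N (f (window g l (Suc (l + r)) j))"
proof -
  obtain L where L: "l + r = Suc L" using assms(1) by (cases "l + r") auto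
  have "g (int j - int l) # butlast (window g l (l + r) (Suc j)) = window g l (l + r) j"
    unfolding L window_butlast by (simp add: window_Suc)
  then show ?thesis using assms(2,3) window_in_tuples[of g s]
    unfolding null_delta_def by (auto simp: window_Suc intro!: exI[of _ "g (int j - int l)"])
qed

lemma per_delta_window_step:
  assumes "l + r \<ge> 1" and "\<And>i. g i < s"
    and "(a, window g l (l + r) j) \<in> N" and "a \<in> tuples s (l + r)"
  shows "(a, window g l (l + r) (Suc j)) \<in> per_delta s l r f N (f (window g l (Suc (l + r)) j))"
proof -
  obtain L where L: "l + r = Suc L" using assms(1) by (cases "l + r") auto
  have "g (int j - int l) # butlast (window g l (l + r) (Suc j)) = window g l (l + r) j"
    unfolding L window_butlast by (simp add: window_Suc)
  then show ?thesis using assms(2-4) window_in_tuples[of g s]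
    unfolding per_delta_def by (auto simp: window_Suc intro!: exI[of _ "g (int j - int l)"])
qed

lemma null_window_in_deltas:
  assumes "set x \<subseteq> {..<s}" and "0 < s" and "l + r \<ge> 1" and "j \<le> length x"
  shows "window (cell Null x) l (l + r) j
    \<in> deltas (null_delta s l r f) (null_root s l r) (take j (global_map Null l r f x))"
  using assms(4)
proof (induction j)
  case 0
  have "\<forall>v \<in> set (take l (window (cell Null x) l (l + r) 0)). v = 0"
    by (auto simp: window_def take_map cell_def)
  then have "window (cell Null x) l (l + r) 0 \<in> null_root s l r"
    using window_in_tuples[of "cell Null x" s] cell_Null_less[OF assms(1,2)]
    by (simp add: null_root_def)
  then show ?case by (simp add: deltas_def)
next
  case (Suc j)
  then have "take (Suc j) (global_map Null l r f x)
      = take j (global_map Null l r f x) @ [f (window (cell Null x) l (Suc (l + r)) j)]"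
    by (simp add: take_Suc_conv_app_nth global_map_nth_window)
  with Suc show ?case
    using null_delta_window_step[where g = "cell Null x", OF assms(3) cell_Null_less[OF assms(1,2)]]
    by (simp add: deltas_snoc)
qed

lemma per_window_in_deltas:
  assumes "set x \<subseteq> {..<s}" and "x \<noteq> []" and "l + r \<ge> 1" and "j \<le> length x"
  shows "(window (cell Periodic x) l (l + r) 0, window (cell Periodic x) l (l + r) j)
    \<in> deltas (per_delta s l r f) (per_root s l r) (take j (global_map Periodic l r f x))"
  using assms(4)
proof (induction j)
  case 0
  show ?case using window_in_tuples[of "cell Periodic x" s] cell_Periodic_less[OF assms(1,2)]
    by (simp add: deltas_def per_root_def)
next
  case (Suc j)
  then have "take (Suc j) (global_map Periodic l r f x)
      = take j (global_map Periodic l r f x) @ [f (window (cell Periodic x) l (Suc (l + r)) j)]"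
    by (simp add: take_Suc_conv_app_nth global_map_nth_window)
  with Suc show ?case
    using per_delta_window_step[where g = "cell Periodic x", OF assms(3) cell_Periodic_less[OF assms(1,2)]]
      window_in_tuples[of "cell Periodic x" s] cell_Periodic_less[OF assms(1,2)]
    by (simp add: deltas_snoc)
qed

lemma window_Null_end_accepted:
  assumes "set x \<subseteq> {..<s}" and "0 < s"
  shows "window (cell Null x) l (l + r) (length x) \<in> null_accept s l r"
proof -
  have "\<forall>v \<in> set (drop l (window (cell Null x) l (l + r) (length x))). v = 0"
    by (auto simp: window_def drop_map cell_def)
  then show ?thesis
    using window_in_tuples[of "cell Null x" s] cell_Null_less[OF assms] by (simp add: null_accept_def)
qed

lemma window_Periodic_length:
  "window (cell Periodic x) l L (length x) = window (cell Periodic x) l L 0"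
proof -
  have "(int (length x) + int t - int l) mod int (length x) = (int t - int l) mod int (length x)" for t
    by (metis add_diff_eq add.commute mod_add_self2)
  then show ?thesis by (simp add: window_def cell_def Let_def)
qed

lemma null_rg_accepts_image:
  assumes "set x \<subseteq> {..<s}" and "0 < s" and "l + r \<ge> 1"
  shows "deltas (null_delta s l r f) (null_root s l r) (global_map Null l r f x)
    \<inter> null_accept s l r \<noteq> {}"
  using null_window_in_deltas[OF assms le_refl, of f] window_Null_end_accepted[OF assms(1,2)] by auto

lemma per_rg_accepts_image:
  assumes "set x \<subseteq> {..<s}" and "0 < s" and "l + r \<ge> 1"
  shows "deltas (per_delta s l r f) (per_root s l r) (global_map Periodic l r f x)
    \<inter> per_root s l r \<noteq> {}"
proof (cases "x = []")
  case True
  have "(replicate (l + r) 0, replicate (l + r) 0) \<in> per_root s l r"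
    using assms(2) by (auto simp: per_root_def tuples_def)
  then show ?thesis using True by (auto simp: global_map_def deltas_def)
next
  case False
  let ?w = "window (cell Periodic x) l (l + r)"
  have "(?w 0, ?w 0) \<in> deltas (per_delta s l r f) (per_root s l r) (global_map Periodic l r f x)"
    using per_window_in_deltas[OF assms(1) False assms(3) le_refl, of f]
    by (simp add: window_Periodic_length)
  moreover have "(?w 0, ?w 0) \<in> per_root s l r"
    using window_in_tuples[of "cell Periodic x" s] cell_Periodic_less[OF assms(1) False]
    by (auto simp: per_root_def)
  ultimately show ?thesis by blast
qed

lemma RG_condition_config_without_preimage:
  assumes "RG_condition b s l r f k r1 r2" and "coprime r1 r2"
    and "int k + int r1 * int r2 - int r1 - int r2 < int n"
    and "0 < s" and "l + r \<ge> 1"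
  obtains y where "y \<in> configs s n" "y \<notin> global_map b l r f ` configs s n"
proof (cases b)
  case Null
  then have "neg_vertex_condition s (null_root s l r) (null_accept s l r) (null_delta s l r f) k r1 r2"
    using assms(1) by (simp add: RG_condition_def)
  then obtain y where y: "length y = n" "set y \<subseteq> {..<s}"
    and neg: "deltas (null_delta s l r f) (null_root s l r) y \<inter> null_accept s l r = {}"
    using neg_vertex_condition_negative_word[OF _ assms(2,3)] by blast
  have "y \<notin> global_map b l r f ` configs s n"
    using neg Null null_rg_accepts_image[OF _ assms(4,5), of _ f] by (auto simp: configs_def)
  with y show thesis using that by (simp add: configs_def)
next
  case Periodic
  then have "neg_vertex_condition s (per_root s l r) (per_root s l r) (per_delta s l r f) k r1 r2"
    using assms(1) by (simp add: RG_condition_def)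
  then obtain y where y: "length y = n" "set y \<subseteq> {..<s}"
    and neg: "deltas (per_delta s l r f) (per_root s l r) y \<inter> per_root s l r = {}"
    using neg_vertex_condition_negative_word[OF _ assms(2,3)] by blast
  have "y \<notin> global_map b l r f ` configs s n"
    using neg Periodic per_rg_accepts_image[OF _ assms(4,5), of _ f] by (auto simp: configs_def)
  with y show thesis using that by (simp add: configs_def)
qed

theorem corollary2:
  fixes b :: boundary and s l r k r1 r2 :: nat and f :: "nat list \<Rightarrow> nat"
  assumes "s \<ge> 1"
    and "l + 1 + r \<ge> 2"
    and "local_rule s (l + 1 + r) f"
    and "k \<ge> 1"
    and "RG_condition b s l r f k r1 r2"
    and "coprime r1 r2"
  shows "\<forall>n::nat. int n > int k + int r1 * int r2 - int r1 - int r2 \<longrightarrow>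
           \<not> n_cell_reversible b s l r f n"
proof (intro allI impI notI)
  fix n
  assume "int n > int k + int r1 * int r2 - int r1 - int r2"
  then obtain y where "y \<in> configs s n" "y \<notin> global_map b l r f ` configs s n"
    using RG_condition_config_without_preimage[OF assms(5,6)] assms(1,2) by auto
  moreover assume "n_cell_reversible b s l r f n"
  ultimately show False by (simp add: n_cell_reversible_def bij_betw_def)
qed

end
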